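(* Let $f\colon X\to X$ be a piecewise $\lambda$-contraction and $x_0\in X$. If $\Omega(f)\cap S(f)=\emptyset$, then $f$ is asymptotically periodic on $Z(f)$.
   Context: $(X,d)$ is a compact metric space whose open balls are connected, with $\mathrm{diam}(X)>0$, and $\lambda\in(0,1)$. A piecewise $\lambda$-contraction $f$: there exist $N\in\mathbb{N}$, open connected pairwise disjoint $A_1,\dots,A_N\subset X$ with dense union $X'$, and bi-Lipschitz $\varphi_i\colon X\to X$ with Lipschitz constant $\le\lambda$, $f|_{A_i}=\varphi_i|_{A_i}$; $S(f)=X\setminus X'$. $x$ is regular of order $n$ if $f^j(x)\notin S(f)$ for $0\le j<n$, regular if for all $n$; $Z(f)$ is the set of regular points. $\mathcal{I}_n(f)$ is the set of tuples $(i_0,\dots,i_{n-1})$ such that some regular point $x$ of order $n$ has $f^j(x)\in A_{i_j}$ for $0\le j<n$. For $\alpha=(i_0,\dots,i_{n-1})$, $\varphi^\alpha=\varphi_{i_{n-1}}\circ\cdots\circ\varphi_{i_0}$ and $\Omega(f)=\bigcap_{m\ge1}\overline{\bigcup_{n\ge m}\{\varphi^\alpha(x_0):\alpha\in\mathcal{I}_n(f)\}}$. $f$ is asymptotically periodic on $Y$ if $\bigcup_{x\in Y}\omega(f,x)$ is a union of finitely many periodic orbits, where $\omega(f,x)=\bigcap_{m\ge1}\overline{\bigcup_{n\ge m}\{f^n(x)\}}$. *)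

theory Defs
  imports "HOL-Analysis.Analysis"
begin

definition good_space :: "'a::metric_space set \<Rightarrow> bool" where
  "good_space X \<longleftrightarrow> compact X \<and>
     (\<forall>x\<in>X. \<forall>r>0. connected (ball x r \<inter> X)) \<and> diameter X > 0"

definition piecewise_contraction ::
  "'a::metric_space set \<Rightarrow> real \<Rightarrow> nat \<Rightarrow> (nat \<Rightarrow> 'a set) \<Rightarrow> (nat \<Rightarrow> 'a \<Rightarrow> 'a)
     \<Rightarrow> ('a \<Rightarrow> 'a) \<Rightarrow> bool" where
  "piecewise_contraction X lam N A \<phi> f \<longleftrightarrow>
     f ` X \<subseteq> X \<and>
     (\<forall>i<N. openin (top_of_set X) (A i) \<and> connected (A i)) \<and>
     (\<forall>i<N. \<forall>j<N. i \<noteq> j \<longrightarrow> A i \<inter> A j = {}) \<and>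
     X \<subseteq> closure (\<Union>i<N. A i) \<and>
     (\<forall>i<N. \<phi> i ` X \<subseteq> X \<and> lam-lipschitz_on X (\<phi> i) \<and>
        (\<exists>c>0. \<forall>x\<in>X. \<forall>y\<in>X. c * dist x y \<le> dist (\<phi> i x) (\<phi> i y))) \<and>
     (\<forall>i<N. \<forall>x\<in>A i. f x = \<phi> i x)"

definition sing_set :: "'a set \<Rightarrow> nat \<Rightarrow> (nat \<Rightarrow> 'a set) \<Rightarrow> 'a set" where
  "sing_set X N A = X - (\<Union>i<N. A i)"

definition regular_of_order ::
  "'a set \<Rightarrow> nat \<Rightarrow> (nat \<Rightarrow> 'a set) \<Rightarrow> ('a \<Rightarrow> 'a) \<Rightarrow> nat \<Rightarrow> 'a \<Rightarrow> bool" where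
  "regular_of_order X N A f n x \<longleftrightarrow>
     x \<in> X \<and> (\<forall>j<n. (f ^^ j) x \<notin> sing_set X N A)"

definition regular_set :: "'a set \<Rightarrow> nat \<Rightarrow> (nat \<Rightarrow> 'a set) \<Rightarrow> ('a \<Rightarrow> 'a) \<Rightarrow> 'a set" where
  "regular_set X N A f = {x. \<forall>n. regular_of_order X N A f n x}"

definition itin :: "'a set \<Rightarrow> nat \<Rightarrow> (nat \<Rightarrow> 'a set) \<Rightarrow> ('a \<Rightarrow> 'a) \<Rightarrow> nat \<Rightarrow> nat list set" where
  "itin X N A f n = {\<alpha>. length \<alpha> = n \<and> set \<alpha> \<subseteq> {..<N} \<and>
     (\<exists>x. regular_of_order X N A f n x \<and> (\<forall>j<n. (f ^^ j) x \<in> A (\<alpha> ! j)))}"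

text \<open>phi^alpha = phi_{i_{n-1}} o ... o phi_{i_0}.\<close>
definition comp_word :: "(nat \<Rightarrow> 'a \<Rightarrow> 'a) \<Rightarrow> nat list \<Rightarrow> 'a \<Rightarrow> 'a" where
  "comp_word \<phi> \<alpha> x = foldl (\<lambda>y i. \<phi> i y) x \<alpha>"

definition Omega_set ::
  "'a::topological_space set \<Rightarrow> nat \<Rightarrow> (nat \<Rightarrow> 'a set) \<Rightarrow> (nat \<Rightarrow> 'a \<Rightarrow> 'a) \<Rightarrow> ('a \<Rightarrow> 'a) \<Rightarrow> 'a \<Rightarrow> 'a set" where
  "Omega_set X N A \<phi> f x0 =
     (\<Inter>m\<in>{1..}. closure (\<Union>n\<in>{m..}. {comp_word \<phi> \<alpha> x0 | \<alpha>. \<alpha> \<in> itin X N A f n}))"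

definition omega_limit :: "('a::topological_space \<Rightarrow> 'a) \<Rightarrow> 'a \<Rightarrow> 'a set" where
  "omega_limit f x = (\<Inter>m\<in>{1..}. closure (\<Union>n\<in>{m..}. {(f ^^ n) x}))"

definition periodic_point :: "('a \<Rightarrow> 'a) \<Rightarrow> 'a \<Rightarrow> bool" where
  "periodic_point f p \<longleftrightarrow> (\<exists>n\<ge>1. (f ^^ n) p = p)"

definition orbit :: "('a \<Rightarrow> 'a) \<Rightarrow> 'a \<Rightarrow> 'a set" where
  "orbit f p = {(f ^^ k) p | k. True}"

definition asymptotically_periodic_on :: "('a::topological_space \<Rightarrow> 'a) \<Rightarrow> 'a set \<Rightarrow> bool" where
  "asymptotically_periodic_on f Y \<longleftrightarrow>
     (\<exists>P. finite P \<and> (\<forall>p\<in>P. periodic_point f p) \<and>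
        (\<Union>x\<in>Y. omega_limit f x) = (\<Union>p\<in>P. orbit f p))"

end

theory Submission
  imports Defs
begin

(*
  Since \<Omega>(f) is compact and disjoint from the closed singular set S(f), some radius \<rho> > 0
  separates the two. A \<rho>-ball around a point of \<Omega>(f) meets X in a connected set that avoids
  S(f), so it lies in a single piece A\<^sub>i, where f = \<phi>\<^sub>i is a \<lambda>-contraction.

  For a regular point x, f\<^sup>n(x) = \<phi>\<^sup>\<alpha>(x) where \<alpha> is its itinerary of length n, and
  \<phi>\<^sup>\<alpha>(x) is \<lambda>\<^sup>n diam X close to \<phi>\<^sup>\<alpha>(x\<^sub>0), which accumulates only on \<Omega>(f).
  So every regular orbit is eventually trapped in a closed neighbourhood V of \<Omega>(f) near which
  f contracts. A trapped orbit returns close to itself by compactness; contraction turns such a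
  return into a periodic point whose orbit the trapped orbit approaches exponentially fast.
  Finally, distinct periodic points whose orbits stay in V are uniformly separated, hence there
  are only finitely many of them.
*)

lemma funpow_in_invariant: "f ` X \<subseteq> X \<Longrightarrow> x \<in> X \<Longrightarrow> (f ^^ n) x \<in> X"
  by (induction n) auto

lemma funpow_add_apply: "(f ^^ (m + n)) x = (f ^^ m) ((f ^^ n) x)"
  by (simp add: funpow_add)

lemma tendsto_zero_geometric_bound:
  fixes lam :: real
  assumes "0 \<le> lam" "lam < 1" "\<And>k. 0 \<le> g k" "\<And>k. g k \<le> lam ^ k * d"
  shows "g \<longlonglongrightarrow> 0"
proof (rule Lim_null_comparison[OF always_eventually])
  show "(\<lambda>k. lam ^ k * d) \<longlonglongrightarrow> 0"
    using assms(1,2) by (intro tendsto_mult_left_zero LIMSEQ_power_zero) auto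
qed (use assms(3,4) in auto)

lemma orbit_of_periodic:
  assumes "0 < p" "(f ^^ p) y = y"
  shows "orbit f y = (\<lambda>k. (f ^^ k) y) ` {..<p}"
proof (intro equalityI subsetI)
  fix z assume "z \<in> orbit f y"
  then obtain k where "z = (f ^^ k) y"
    by (auto simp: orbit_def)
  then show "z \<in> (\<lambda>k. (f ^^ k) y) ` {..<p}"
    using funpow_mod_eq[OF assms(2), of k] assms(1) by (metis imageI lessThan_iff mod_less_divisor)
qed (auto simp: orbit_def)

lemma omega_limit_iff:
  fixes f :: "'a::metric_space \<Rightarrow> 'a"
  shows "z \<in> omega_limit f x \<longleftrightarrow> (\<forall>e>0. \<forall>m. \<exists>n\<ge>m. dist ((f ^^ n) x) z < e)"
proof -
  have "z \<in> omega_limit f x \<longleftrightarrow> (\<forall>m\<ge>1. \<forall>e>0. \<exists>n\<ge>m. dist ((f ^^ n) x) z < e)"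
    by (auto simp: omega_limit_def closure_approachable)
  also have "\<dots> \<longleftrightarrow> (\<forall>e>0. \<forall>m. \<exists>n\<ge>m. dist ((f ^^ n) x) z < e)"
    by (meson le_trans max.cobounded1 max.cobounded2)
  finally show ?thesis .
qed

lemma omega_limit_subset_closure_orbit:
  fixes f :: "'a::metric_space \<Rightarrow> 'a"
  assumes asym: "(\<lambda>k. dist ((f ^^ (M + k)) x) ((f ^^ k) y)) \<longlonglongrightarrow> 0"
  shows "omega_limit f x \<subseteq> closure (orbit f y)"
proof
  fix z assume z: "z \<in> omega_limit f x"
  show "z \<in> closure (orbit f y)"
    unfolding closure_approachable
  proof (intro allI impI)
    fix e :: real assume "0 < e"
    then obtain K where K: "\<And>k. K \<le> k \<Longrightarrow> dist ((f ^^ (M + k)) x) ((f ^^ k) y) < e/2"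
      using LIMSEQ_D[OF asym, of "e/2"] by auto
    obtain n where n: "M + K \<le> n" "dist ((f ^^ n) x) z < e/2"
      using z \<open>0 < e\<close> unfolding omega_limit_iff by (meson half_gt_zero)
    have "dist ((f ^^ n) x) ((f ^^ (n - M)) y) < e/2"
      using K[of "n - M"] n(1) by force
    then have "dist ((f ^^ (n - M)) y) z < e"
      using n(2) by (metis dist_commute dist_triangle_half_l)
    then show "\<exists>w\<in>orbit f y. dist w z < e"
      unfolding orbit_def by blast
  qed
qed

lemma orbit_subset_omega_limit:
  fixes f :: "'a::metric_space \<Rightarrow> 'a"
  assumes per: "0 < p" "(f ^^ p) y = y"
    and asym: "(\<lambda>k. dist ((f ^^ (M + k)) x) ((f ^^ k) y)) \<longlonglongrightarrow> 0"
  shows "orbit f y \<subseteq> omega_limit f x"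
proof
  fix w assume "w \<in> orbit f y"
  then obtain j where w: "w = (f ^^ j) y"
    by (auto simp: orbit_def)
  show "w \<in> omega_limit f x"
    unfolding omega_limit_iff
  proof (intro allI impI)
    fix e :: real and m :: nat assume "0 < e"
    then obtain K where K: "\<And>k. K \<le> k \<Longrightarrow> dist ((f ^^ (M + k)) x) ((f ^^ k) y) < e"
      using LIMSEQ_D[OF asym] by auto
    define k where "k = (m + K) * p + j"
    have "m + K \<le> k"
      using per(1) by (simp add: k_def trans_le_add1)
    moreover have "(f ^^ k) y = w"
      using funpow_mod_eq[OF per(2), of k] funpow_mod_eq[OF per(2), of j] by (simp add: k_def w)
    ultimately show "\<exists>n\<ge>m. dist ((f ^^ n) x) w < e"
      using K[of k] by (intro exI[of _ "M + k"]) auto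
  qed
qed

lemma omega_limit_eq_orbit_of_asymptotic:
  fixes f :: "'a::metric_space \<Rightarrow> 'a"
  assumes per: "0 < p" "(f ^^ p) y = y"
    and asym: "(\<lambda>k. dist ((f ^^ (M + k)) x) ((f ^^ k) y)) \<longlonglongrightarrow> 0"
  shows "omega_limit f x = orbit f y"
proof -
  have "closure (orbit f y) = orbit f y"
    by (simp add: orbit_of_periodic[OF per] finite_imp_closed)
  then show ?thesis
    using omega_limit_subset_closure_orbit[OF asym] orbit_subset_omega_limit[OF per asym] by blast
qed

lemma separate_compact_closed_metric:
  fixes S T :: "'a::metric_space set"
  assumes "compact S" "closed T" "S \<inter> T = {}"
  obtains d where "0 < d" "\<And>x y. x \<in> S \<Longrightarrow> y \<in> T \<Longrightarrow> d \<le> dist x y"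
proof (cases "S = {} \<or> T = {}")
  case True
  then show ?thesis
    using that[of 1] by auto
next
  case False
  then have "S \<noteq> {}" "T \<noteq> {}"
    by auto
  then obtain a where a: "a \<in> S" "\<And>x. x \<in> S \<Longrightarrow> infdist a T \<le> infdist x T"
    using continuous_attains_inf[OF assms(1) _ continuous_on_infdist[OF continuous_on_id]] by blast
  have "0 < infdist a T"
    using infdist_pos_not_in_closed[OF assms(2) \<open>T \<noteq> {}\<close>] a(1) assms(3) by blast
  moreover have "infdist a T \<le> dist x y" if "x \<in> S" "y \<in> T" for x y
    using a(2)[OF that(1)] infdist_le[OF that(2), of x] by linarith
  ultimately show ?thesis
    using that by blast
qed

lemma decseq_closed_eventually_subset_open:
  fixes T :: "nat \<Rightarrow> 'a::topological_space set"
  assumes "compact K" "\<And>m. closed (T m)" "\<And>m. T m \<subseteq> K" "decseq T"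
    and "open U" "(\<Inter>m. T m) \<subseteq> U"
  obtains m where "T m \<subseteq> U"
proof -
  have "(K - U) \<inter> (\<Inter>m. T m) \<noteq> {}" if never_in_U: "\<And>m. \<not> T m \<subseteq> U"
  proof (rule compact_imp_fip_image)
    show "compact (K - U)"
      using assms(1,5) by (rule compact_diff)
    show "closed (T m)" for m
      by (rule assms(2))
    fix I :: "nat set" assume "finite I"
    define m where "m = Max (insert 0 I)"
    have "T m \<subseteq> T i" if "i \<in> I" for i
    proof -
      have "i \<le> m"
        using \<open>finite I\<close> that by (simp add: m_def)
      then show ?thesis
        using decseqD[OF assms(4)] by blast
    qed
    then have "T m \<subseteq> (\<Inter>i\<in>I. T i)"
      by blast
    moreover obtain x where "x \<in> T m" "x \<notin> U"
      using never_in_U[of m] by blast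
    ultimately show "(K - U) \<inter> (\<Inter>i\<in>I. T i) \<noteq> {}"
      using assms(3) by blast
  qed
  then show ?thesis
    using assms(6) that by blast
qed

lemma INT_atLeast_decseq:
  assumes "decseq T"
  shows "(\<Inter>m\<in>{k..}. T m) = (\<Inter>m. T m)"
proof (intro equalityI subsetI)
  fix x assume x: "x \<in> (\<Inter>m\<in>{k..}. T m)"
  show "x \<in> (\<Inter>m. T m)"
  proof
    fix m
    have "x \<in> T (max k m)"
      using x by simp
    then show "x \<in> T m"
      using decseqD[OF assms max.cobounded2[of m k]] by blast
  qed
qed auto

lemma connected_subset_single_piece:
  assumes C: "connected C" "C \<subseteq> X" "C \<subseteq> (\<Union>i<N. A i)" "w \<in> C"
    and open_pieces: "\<And>i. i < N \<Longrightarrow> openin (top_of_set X) (A i)"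
    and disjoint: "\<And>i j. i < N \<Longrightarrow> j < N \<Longrightarrow> i \<noteq> j \<Longrightarrow> A i \<inter> A j = {}"
  obtains i where "i < N" "C \<subseteq> A i"
proof -
  obtain i where i: "i < N" "w \<in> A i"
    using C by auto
  define B where "B = (\<Union>j\<in>{..<N} - {i}. A j)"
  have "connectedin (top_of_set X) C"
    using C(1,2) by (simp add: connectedin_subtopology)
  moreover have "openin (top_of_set X) B"
    unfolding B_def using open_pieces by (intro openin_Union) blast
  moreover have "A i \<inter> B \<inter> C = {}"
    using disjoint i(1) unfolding B_def by blast
  moreover have "C \<subseteq> A i \<union> B"
    using C(3) unfolding B_def by blast
  moreover have "A i \<inter> C \<noteq> {}"
    using i C(4) by blast
  ultimately have "B \<inter> C = {}"
    using connectedinD[of "top_of_set X" C "A i" B] open_pieces[OF i(1)] by blast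
  then show ?thesis
    using that[OF i(1)] C(3) unfolding B_def by blast
qed

locale local_contraction =
  fixes X V :: "'a::metric_space set" and f :: "'a \<Rightarrow> 'a" and eps lam :: real
  assumes compact_X: "compact X" and f_maps: "f ` X \<subseteq> X"
    and closed_V: "closed V" and V_sub: "V \<subseteq> X"
    and eps_pos: "0 < eps" and lam: "0 \<le> lam" "lam < 1"
    and contract: "\<And>y z. y \<in> V \<Longrightarrow> z \<in> X \<Longrightarrow> dist y z < eps \<Longrightarrow>
      dist (f y) (f z) \<le> lam * dist y z"
begin

definition trapped :: "'a \<Rightarrow> bool" where
  "trapped y \<longleftrightarrow> (\<forall>k. (f ^^ k) y \<in> V)"

lemma compact_V: "compact V"
  using compact_Int_closed[OF compact_X closed_V] V_sub by (simp add: Int_absorb1)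

lemma trapped_in_V: "trapped y \<Longrightarrow> y \<in> V"
  by (metis trapped_def funpow_0)

lemma trapped_funpow: "trapped y \<Longrightarrow> trapped ((f ^^ n) y)"
  by (simp add: trapped_def flip: funpow_add_apply)

lemma funpow_contract:
  assumes "trapped y" "z \<in> X" "dist y z < eps"
  shows "dist ((f ^^ k) y) ((f ^^ k) z) \<le> lam ^ k * dist y z"
proof (induction k)
  case 0
  show ?case by simp
next
  case (Suc k)
  have "lam ^ k * dist y z \<le> dist y z"
    using lam by (simp add: mult_left_le_one_le power_le_one)
  then have "dist ((f ^^ k) y) ((f ^^ k) z) < eps"
    using Suc assms(3) by linarith
  then have "dist ((f ^^ Suc k) y) ((f ^^ Suc k) z) \<le> lam * dist ((f ^^ k) y) ((f ^^ k) z)"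
    using contract assms(1,2) funpow_in_invariant[OF f_maps] by (simp add: trapped_def)
  also have "\<dots> \<le> lam * (lam ^ k * dist y z)"
    using Suc lam by (simp add: mult_left_mono)
  finally show ?case by simp
qed

lemma continuous_at_V: "y \<in> V \<Longrightarrow> continuous (at y within X) f"
  unfolding continuous_within_eps_delta
proof (intro allI impI)
  fix e :: real assume "y \<in> V" "0 < e"
  show "\<exists>d>0. \<forall>z\<in>X. dist z y < d \<longrightarrow> dist (f z) (f y) < e"
  proof (intro exI[of _ "min e eps"] conjI ballI impI)
    fix z assume "z \<in> X" "dist z y < min e eps"
    then have "dist (f y) (f z) \<le> lam * dist y z"
      using contract \<open>y \<in> V\<close> by (simp add: dist_commute)
    also have "\<dots> \<le> dist y z"
      using lam by (simp add: mult_left_le_one_le)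
    finally show "dist (f z) (f y) < e"
      using \<open>dist z y < min e eps\<close> by (simp add: dist_commute)
  qed (use \<open>0 < e\<close> eps_pos in auto)
qed

lemma tendsto_funpow_trapped:
  assumes "\<And>k. trapped (xs k)" "xs \<longlonglongrightarrow> y"
  shows "(\<lambda>k. (f ^^ j) (xs k)) \<longlonglongrightarrow> (f ^^ j) y \<and> (f ^^ j) y \<in> V"
proof (induction j)
  case 0
  show ?case
    using assms closed_sequentially[OF closed_V, of xs y] trapped_in_V by auto
next
  case (Suc j)
  have "(f ^^ j) (xs k) \<in> X" for k
    using assms(1) V_sub by (auto simp: trapped_def)
  then have "(\<lambda>k. f ((f ^^ j) (xs k))) \<longlonglongrightarrow> f ((f ^^ j) y)"
    using Suc by (intro continuous_within_tendsto_compose'[OF continuous_at_V]) auto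
  moreover have "(f ^^ Suc j) (xs k) \<in> V" for k
    using assms(1) by (simp add: trapped_def del: funpow.simps)
  ultimately show ?case
    using closed_sequentially[OF closed_V, of "\<lambda>k. (f ^^ Suc j) (xs k)"] by simp
qed

definition trapped_periodic :: "'a set" where
  "trapped_periodic = {y. periodic_point f y \<and> trapped y}"

lemma trapped_periodic_separated:
  assumes "y \<in> trapped_periodic" "z \<in> trapped_periodic" "dist y z < eps"
  shows "y = z"
proof -
  obtain p q where pq: "1 \<le> p" "(f ^^ p) y = y" "1 \<le> q" "(f ^^ q) z = z"
    using assms(1,2) by (auto simp: trapped_periodic_def periodic_point_def)
  then have "(f ^^ (p * q)) y = y" "(f ^^ (p * q)) z = z"
    using funpow_mod_eq[OF pq(2), of "p * q"] funpow_mod_eq[OF pq(4), of "p * q"] by auto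
  moreover have "lam ^ (p * q) < 1"
    using lam pq by (simp add: power_less_one_iff)
  moreover have "dist ((f ^^ (p * q)) y) ((f ^^ (p * q)) z) \<le> lam ^ (p * q) * dist y z"
    using funpow_contract assms V_sub trapped_in_V by (auto simp: trapped_periodic_def subset_iff)
  ultimately have "dist y z \<le> lam ^ (p * q) * dist y z" "lam ^ (p * q) < 1"
    by simp_all
  then show ?thesis
    by (metis mult_le_cancel_right1 not_less zero_less_dist_iff)
qed

lemma finite_trapped_periodic: "finite trapped_periodic"
proof (rule ccontr)
  assume "infinite trapped_periodic"
  moreover have "trapped_periodic \<subseteq> V"
    using trapped_in_V by (auto simp: trapped_periodic_def)
  ultimately obtain x where "x islimpt trapped_periodic"
    using Heine_Borel_imp_Bolzano_Weierstrass[OF compact_V] by blast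
  then have inf: "infinite (trapped_periodic \<inter> ball x (eps/2))"
    using eps_pos by (simp add: islimpt_eq_infinite_ball)
  then obtain y where y: "y \<in> trapped_periodic \<inter> ball x (eps/2)"
    by (metis finite.emptyI ex_in_conv)
  have "trapped_periodic \<inter> ball x (eps/2) \<subseteq> {y}"
  proof
    fix z assume "z \<in> trapped_periodic \<inter> ball x (eps/2)"
    then show "z \<in> {y}"
      using y trapped_periodic_separated[of y z] dist_triangle_half_l[of y x eps z]
      by (auto simp: dist_commute)
  qed
  then show False
    using inf finite_subset by blast
qed

lemma trapped_close_return:
  assumes "trapped z"
  obtains m p where "0 < p" "dist ((f ^^ m) z) ((f ^^ p) ((f ^^ m) z)) < eps"
proof -
  have "(f ^^ k) z \<in> V" for k
    using assms by (simp add: trapped_def)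
  then obtain l r where r: "strict_mono r" and lim: "((\<lambda>k. (f ^^ k) z) \<circ> r) \<longlonglongrightarrow> l"
    using seq_compactE[OF compact_imp_seq_compact[OF compact_V]] by metis
  obtain N where "\<forall>i\<ge>N. \<forall>j\<ge>N. dist ((f ^^ r i) z) ((f ^^ r j) z) < eps"
    using metric_CauchyD[OF LIMSEQ_imp_Cauchy[OF lim] eps_pos] by auto
  moreover have "r N < r (Suc N)"
    using r by (simp add: strict_mono_def)
  ultimately show ?thesis
    using that[of "r (Suc N) - r N" "r N"] by (simp flip: funpow_add_apply)
qed

lemma limit_of_trapped_almost_fixed:
  assumes "\<And>k. trapped (xs k)" "xs \<longlonglongrightarrow> y"
    and "(\<lambda>k. dist (xs k) ((f ^^ p) (xs k))) \<longlonglongrightarrow> 0"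
  shows "(f ^^ p) y = y" "trapped y"
proof -
  have lim: "(\<lambda>k. (f ^^ j) (xs k)) \<longlonglongrightarrow> (f ^^ j) y" "(f ^^ j) y \<in> V" for j
    using tendsto_funpow_trapped[OF assms(1,2)] by blast+
  have "(\<lambda>k. dist (xs k) ((f ^^ p) (xs k))) \<longlonglongrightarrow> dist y ((f ^^ p) y)"
    using lim(1)[of 0] lim(1)[of p] by (intro tendsto_dist) auto
  then have "dist y ((f ^^ p) y) = 0"
    using assms(3) by (rule LIMSEQ_unique)
  then show "(f ^^ p) y = y"
    by simp
  show "trapped y"
    using lim(2) by (simp add: trapped_def)
qed

lemma close_return_limit_periodic:
  assumes z: "trapped z" and p: "0 < p" and return: "dist z ((f ^^ p) z) < eps"
  obtains y M where "y \<in> trapped_periodic" "(f ^^ p) y = y" "dist y ((f ^^ M) z) < eps"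
proof -
  define w where "w k = (f ^^ (k * p)) z" for k
  have w_trapped: "trapped (w k)" for k
    using trapped_funpow[OF z] by (simp add: w_def)
  have return_w: "dist (w k) ((f ^^ p) (w k)) \<le> lam ^ (k * p) * dist z ((f ^^ p) z)" for k
    using funpow_contract[OF z _ return, of "k * p"] trapped_in_V[OF trapped_funpow[OF z]] V_sub
    by (auto simp: w_def add.commute simp flip: funpow_add_apply)
  obtain y s where s: "strict_mono s" "(w \<circ> s) \<longlonglongrightarrow> y"
    using seq_compactE[OF compact_imp_seq_compact[OF compact_V]] trapped_in_V[OF w_trapped] by metis
  have "dist (w (s k)) ((f ^^ p) (w (s k))) \<le> lam ^ k * dist z ((f ^^ p) z)" for k
  proof -
    have "k \<le> s k * p"
      using seq_suble[OF s(1), of k] p by (metis le_trans mult_le_mono2 mult.right_neutral Suc_leI One_nat_def)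
    then have "lam ^ (s k * p) \<le> lam ^ k"
      using lam by (intro power_decreasing) auto
    then show ?thesis
      using return_w[of "s k"] by (meson mult_right_mono order_trans zero_le_dist)
  qed
  then have "(\<lambda>k. dist ((w \<circ> s) k) ((f ^^ p) ((w \<circ> s) k))) \<longlonglongrightarrow> 0"
    using lam by (intro tendsto_zero_geometric_bound) auto
  then have "(f ^^ p) y = y" "trapped y"
    using limit_of_trapped_almost_fixed[of "w \<circ> s" y p] w_trapped s(2) by auto
  moreover have "y \<in> trapped_periodic"
    using calculation p by (auto simp: trapped_periodic_def periodic_point_def intro!: exI[of _ p])
  moreover obtain K where "dist y (w (s K)) < eps"
    using s(2) eps_pos unfolding lim_sequentially by (metis dist_commute o_apply order_refl)
  ultimately show ?thesis
    using that by (auto simp: w_def)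
qed

lemma omega_limit_eventually_trapped:
  assumes "trapped ((f ^^ n) x)"
  obtains y where "y \<in> trapped_periodic" "omega_limit f x = orbit f y"
proof -
  obtain m p where p: "0 < p" and return: "dist ((f ^^ (m + n)) x) ((f ^^ p) ((f ^^ (m + n)) x)) < eps"
    using trapped_close_return[OF assms] by (metis funpow_add_apply)
  have "trapped ((f ^^ (m + n)) x)"
    using trapped_funpow[OF assms, of m] by (simp add: funpow_add_apply)
  then obtain y M where y: "y \<in> trapped_periodic" "(f ^^ p) y = y"
    and near: "dist y ((f ^^ (M + (m + n))) x) < eps"
    using close_return_limit_periodic[OF _ p return] by (metis funpow_add_apply)
  have "dist ((f ^^ k) y) ((f ^^ k) ((f ^^ (M + (m + n))) x)) \<le> lam ^ k * dist y ((f ^^ (M + (m + n))) x)" for k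
  proof (rule funpow_contract[OF _ _ near])
    show "trapped y"
      using y(1) by (simp add: trapped_periodic_def)
    show "(f ^^ (M + (m + n))) x \<in> X"
      using trapped_in_V[OF trapped_funpow[OF assms, of "M + m"]] V_sub
      by (auto simp: add.assoc simp flip: funpow_add_apply)
  qed
  then have "dist ((f ^^ (M + (m + n) + k)) x) ((f ^^ k) y) \<le> lam ^ k * dist y ((f ^^ (M + (m + n))) x)" for k
    by (simp add: dist_commute add.commute funpow_add_apply)
  then have "(\<lambda>k. dist ((f ^^ (M + (m + n) + k)) x) ((f ^^ k) y)) \<longlonglongrightarrow> 0"
    using lam by (intro tendsto_zero_geometric_bound) auto
  then have "omega_limit f x = orbit f y"
    by (rule omega_limit_eq_orbit_of_asymptotic[OF p y(2)])
  with y(1) show ?thesis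
    using that by blast
qed

lemma asymptotically_periodic_on_eventually_trapped:
  assumes "\<And>x. x \<in> Z \<Longrightarrow> \<exists>n. trapped ((f ^^ n) x)"
  shows "asymptotically_periodic_on f Z"
proof -
  define P where "P = {y \<in> trapped_periodic. \<exists>x\<in>Z. omega_limit f x = orbit f y}"
  have "finite P"
    using finite_trapped_periodic by (simp add: P_def)
  moreover have "\<forall>y\<in>P. periodic_point f y"
    by (simp add: P_def trapped_periodic_def)
  moreover have "(\<Union>x\<in>Z. omega_limit f x) = (\<Union>y\<in>P. orbit f y)"
  proof (intro equalityI subsetI)
    fix z assume "z \<in> (\<Union>x\<in>Z. omega_limit f x)"
    then obtain x where "x \<in> Z" "z \<in> omega_limit f x"
      by blast
    moreover obtain y where "y \<in> trapped_periodic" "omega_limit f x = orbit f y"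
      using assms[OF \<open>x \<in> Z\<close>] omega_limit_eventually_trapped by metis
    ultimately show "z \<in> (\<Union>y\<in>P. orbit f y)"
      by (auto simp: P_def)
  qed (auto simp: P_def)
  ultimately show ?thesis
    unfolding asymptotically_periodic_on_def by blast
qed

end

(* Every point of V lies within \<rho>/2 of some \<omega> \<in> W, so its \<rho>/2-ball stays inside ball \<omega> \<rho>. *)
lemma local_contraction_near:
  fixes X W :: "'a::metric_space set"
  assumes "compact X" "f ` X \<subseteq> X" "0 \<le> lam" "lam < 1" "0 < \<rho>"
    and lip: "\<And>\<omega>. \<omega> \<in> W \<Longrightarrow> lam-lipschitz_on (ball \<omega> \<rho> \<inter> X) f"
  shows "local_contraction X (X \<inter> closure (\<Union>\<omega>\<in>W. ball \<omega> (\<rho>/4))) f (\<rho>/2) lam"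
proof
  show "closed (X \<inter> closure (\<Union>\<omega>\<in>W. ball \<omega> (\<rho>/4)))"
    using compact_imp_closed[OF assms(1)] by blast
  fix y z assume y: "y \<in> X \<inter> closure (\<Union>\<omega>\<in>W. ball \<omega> (\<rho>/4))"
    and z: "z \<in> X" and yz: "dist y z < \<rho>/2"
  have "y \<in> closure (\<Union>\<omega>\<in>W. ball \<omega> (\<rho>/4))" "0 < \<rho>/4"
    using y assms(5) by auto
  then obtain u where u: "u \<in> (\<Union>\<omega>\<in>W. ball \<omega> (\<rho>/4))" "dist u y < \<rho>/4"
    unfolding closure_approachable by blast
  then obtain \<omega> where "\<omega> \<in> W" "dist \<omega> u < \<rho>/4"
    by auto
  then have "dist \<omega> y < \<rho>/2"
    using u(2) dist_triangle[of \<omega> y u] by linarith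
  then have "dist \<omega> y < \<rho>" "dist \<omega> z < \<rho>"
    using yz dist_triangle[of \<omega> z y] zero_le_dist[of \<omega> y] by linarith+
  then have "y \<in> ball \<omega> \<rho> \<inter> X" "z \<in> ball \<omega> \<rho> \<inter> X"
    using y z by auto
  then show "dist (f y) (f z) \<le> lam * dist y z"
    using lipschitz_onD[OF lip[OF \<open>\<omega> \<in> W\<close>]] by blast
qed (use assms in auto)

lemma comp_word_snoc: "comp_word \<phi> (\<alpha> @ [i]) x = \<phi> i (comp_word \<phi> \<alpha> x)"
  by (simp add: comp_word_def)

lemma comp_word_in:
  assumes "set \<alpha> \<subseteq> I" "\<And>i. i \<in> I \<Longrightarrow> \<phi> i ` X \<subseteq> X" "x \<in> X"
  shows "comp_word \<phi> \<alpha> x \<in> X"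
  using assms(1)
proof (induction \<alpha> rule: rev_induct)
  case Nil
  then show ?case
    using assms(3) by (simp add: comp_word_def)
next
  case (snoc i \<alpha>)
  then show ?case
    using assms(2) by (auto simp: comp_word_snoc)
qed

lemma lipschitz_on_comp_word:
  assumes "set \<alpha> \<subseteq> I" "\<And>i. i \<in> I \<Longrightarrow> \<phi> i ` X \<subseteq> X"
    and "\<And>i. i \<in> I \<Longrightarrow> L-lipschitz_on X (\<phi> i)"
  shows "(L ^ length \<alpha>)-lipschitz_on X (comp_word \<phi> \<alpha>)"
  using assms(1)
proof (induction \<alpha> rule: rev_induct)
  case Nil
  show ?case
    using lipschitz_on_id by (simp add: comp_word_def)
next
  case (snoc i \<alpha>)
  have "(L ^ length \<alpha>)-lipschitz_on X (comp_word \<phi> \<alpha>)"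
    using snoc by simp
  moreover have "comp_word \<phi> \<alpha> ` X \<subseteq> X"
    using comp_word_in[of \<alpha> I \<phi> X] snoc.prems assms(2) by auto
  then have "L-lipschitz_on (comp_word \<phi> \<alpha> ` X) (\<phi> i)"
    using snoc.prems by (intro lipschitz_on_subset[OF assms(3)]) auto
  ultimately have "(L * L ^ length \<alpha>)-lipschitz_on X (\<lambda>x. \<phi> i (comp_word \<phi> \<alpha> x))"
    by (rule lipschitz_on_compose2)
  then show ?case
    by (simp add: comp_word_snoc)
qed

lemma itinerary_of_regular:
  assumes f_maps: "f ` X \<subseteq> X" and f_eq: "\<And>i y. i < N \<Longrightarrow> y \<in> A i \<Longrightarrow> f y = \<phi> i y"
    and x: "x \<in> regular_set X N A f"
  obtains \<alpha> where "\<alpha> \<in> itin X N A f n" "comp_word \<phi> \<alpha> x = (f ^^ n) x"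
proof -
  have reg: "regular_of_order X N A f n x" for n
    using x by (simp add: regular_set_def)
  have "\<exists>i<N. (f ^^ j) x \<in> A i" for j
    using reg[of "Suc j"] funpow_in_invariant[OF f_maps, of x j]
    by (auto simp: regular_of_order_def sing_set_def)
  then obtain piece where piece: "\<And>j. piece j < N \<and> (f ^^ j) x \<in> A (piece j)"
    by metis
  define \<alpha> where "\<alpha> = map piece [0..<n]"
  have "\<alpha> \<in> itin X N A f n"
    unfolding itin_def \<alpha>_def using piece reg[of n] by auto
  moreover have "comp_word \<phi> (map piece [0..<k]) x = (f ^^ k) x" for k
  proof (induction k)
    case 0
    show ?case by (simp add: comp_word_def)
  next
    case (Suc k)
    have "f ((f ^^ k) x) = \<phi> (piece k) ((f ^^ k) x)"
      using f_eq piece[of k] by blast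
    then show ?case
      using Suc by (simp add: comp_word_snoc)
  qed
  ultimately show ?thesis
    using that by (simp add: \<alpha>_def)
qed

locale piecewise_contraction_on =
  fixes X :: "'a::metric_space set" and lam :: real and N :: nat
    and A :: "nat \<Rightarrow> 'a set" and \<phi> :: "nat \<Rightarrow> 'a \<Rightarrow> 'a" and f :: "'a \<Rightarrow> 'a"
  assumes good: "good_space X" and lam: "0 < lam" "lam < 1"
    and pc: "piecewise_contraction X lam N A \<phi> f"
begin

lemma compact_X: "compact X"
  using good by (simp add: good_space_def)

lemma f_maps: "f ` X \<subseteq> X"
  using pc by (simp add: piecewise_contraction_def)

lemma f_eq: "i < N \<Longrightarrow> y \<in> A i \<Longrightarrow> f y = \<phi> i y"
  using pc by (simp add: piecewise_contraction_def)

lemma \<phi>_maps: "i < N \<Longrightarrow> \<phi> i ` X \<subseteq> X"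
  using pc by (simp add: piecewise_contraction_def)

lemma \<phi>_lipschitz: "i < N \<Longrightarrow> lam-lipschitz_on X (\<phi> i)"
  using pc by (simp add: piecewise_contraction_def)

lemma pieces_openin: "i < N \<Longrightarrow> openin (top_of_set X) (A i)"
  using pc by (simp add: piecewise_contraction_def)

lemma pieces_disjoint: "i < N \<Longrightarrow> j < N \<Longrightarrow> i \<noteq> j \<Longrightarrow> A i \<inter> A j = {}"
  using pc by (simp add: piecewise_contraction_def)

lemma closed_sing_set: "closed (sing_set X N A)"
proof -
  have "openin (top_of_set X) (\<Union>i<N. A i)"
    using pieces_openin by blast
  then show ?thesis
    using closedin_closed_eq compact_imp_closed[OF compact_X] unfolding sing_set_def by fastforce
qed

definition word_images :: "'a \<Rightarrow> nat \<Rightarrow> 'a set" where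
  "word_images x0 m = (\<Union>n\<in>{m..}. {comp_word \<phi> \<alpha> x0 | \<alpha>. \<alpha> \<in> itin X N A f n})"

lemma word_images_subset: "x0 \<in> X \<Longrightarrow> word_images x0 m \<subseteq> X"
  using comp_word_in[of _ "{..<N}" \<phi> X x0] \<phi>_maps by (auto simp: word_images_def itin_def)

lemma decseq_word_images: "decseq (\<lambda>m. closure (word_images x0 m))"
  unfolding decseq_def word_images_def by (intro allI impI closure_mono UN_mono) auto

lemma Omega_set_eq: "Omega_set X N A \<phi> f x0 = (\<Inter>m. closure (word_images x0 m))"
  unfolding Omega_set_def word_images_def[symmetric] by (rule INT_atLeast_decseq[OF decseq_word_images])

lemma Omega_set_subset: "x0 \<in> X \<Longrightarrow> Omega_set X N A \<phi> f x0 \<subseteq> X"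
  using closure_minimal[OF word_images_subset compact_imp_closed[OF compact_X], of x0 0]
  by (auto simp: Omega_set_eq)

lemma compact_Omega_set: "x0 \<in> X \<Longrightarrow> compact (Omega_set X N A \<phi> f x0)"
  using compact_Int_closed[OF compact_X, of "Omega_set X N A \<phi> f x0"] Omega_set_subset
  by (auto simp: Omega_set_eq Int_absorb1)

lemma words_eventually_near_Omega_set:
  assumes "x0 \<in> X" "0 < \<delta>"
  obtains m where "\<And>n \<alpha>. m \<le> n \<Longrightarrow> \<alpha> \<in> itin X N A f n \<Longrightarrow>
    \<exists>\<omega>\<in>Omega_set X N A \<phi> f x0. dist (comp_word \<phi> \<alpha> x0) \<omega> < \<delta>"
proof -
  define U where "U = (\<Union>\<omega>\<in>Omega_set X N A \<phi> f x0. ball \<omega> \<delta>)"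
  have "open U"
    unfolding U_def by (intro open_UN ballI open_ball)
  moreover have "(\<Inter>m. closure (word_images x0 m)) \<subseteq> U"
    using assms(2) by (auto simp: U_def simp flip: Omega_set_eq)
  moreover have "closure (word_images x0 m) \<subseteq> X" for m
    using closure_minimal[OF word_images_subset[OF assms(1)] compact_imp_closed[OF compact_X]] .
  ultimately obtain m where m: "closure (word_images x0 m) \<subseteq> U"
    using decseq_closed_eventually_subset_open[OF compact_X closed_closure _ decseq_word_images]
    by blast
  show ?thesis
  proof (rule that)
    fix n \<alpha> assume "m \<le> n" "\<alpha> \<in> itin X N A f n"
    then have "comp_word \<phi> \<alpha> x0 \<in> word_images x0 m"
      unfolding word_images_def by blast
    then have "comp_word \<phi> \<alpha> x0 \<in> U"
      using m closure_subset by blast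
    then show "\<exists>\<omega>\<in>Omega_set X N A \<phi> f x0. dist (comp_word \<phi> \<alpha> x0) \<omega> < \<delta>"
      by (auto simp: U_def dist_commute)
  qed
qed

lemma regular_orbit_eventually_near_Omega_set:
  assumes "x0 \<in> X" "x \<in> regular_set X N A f" "0 < \<delta>"
  obtains n0
    where "\<And>n. n0 \<le> n \<Longrightarrow> (f ^^ n) x \<in> X \<inter> (\<Union>\<omega>\<in>Omega_set X N A \<phi> f x0. ball \<omega> \<delta>)"
proof -
  have "x \<in> X"
    using assms(2) by (simp add: regular_set_def regular_of_order_def)
  obtain m where m: "\<And>n \<alpha>. m \<le> n \<Longrightarrow> \<alpha> \<in> itin X N A f n \<Longrightarrow>
      \<exists>\<omega>\<in>Omega_set X N A \<phi> f x0. dist (comp_word \<phi> \<alpha> x0) \<omega> < \<delta>/2"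
    using words_eventually_near_Omega_set[OF assms(1), of "\<delta>/2"] assms(3) by auto
  have "(\<lambda>n. lam ^ n * diameter X) \<longlonglongrightarrow> 0"
    using lam by (intro tendsto_mult_left_zero LIMSEQ_power_zero) auto
  then have "eventually (\<lambda>n. lam ^ n * diameter X < \<delta>/2) sequentially"
    using assms(3) by (intro order_tendstoD(2)) auto
  then obtain K where K: "\<And>n. K \<le> n \<Longrightarrow> lam ^ n * diameter X < \<delta>/2"
    unfolding eventually_sequentially by blast
  show ?thesis
  proof (rule that[of "max m K"])
    fix n assume n: "max m K \<le> n"
    obtain \<alpha> where \<alpha>: "\<alpha> \<in> itin X N A f n" "comp_word \<phi> \<alpha> x = (f ^^ n) x"
      using itinerary_of_regular[where \<phi> = \<phi>, OF f_maps f_eq assms(2)] by blast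
    obtain \<omega> where \<omega>: "\<omega> \<in> Omega_set X N A \<phi> f x0" "dist (comp_word \<phi> \<alpha> x0) \<omega> < \<delta>/2"
      using m[OF _ \<alpha>(1)] n by auto
    have "length \<alpha> = n" "set \<alpha> \<subseteq> {..<N}"
      using \<alpha>(1) by (simp_all add: itin_def)
    then have "(lam ^ n)-lipschitz_on X (comp_word \<phi> \<alpha>)"
      using lipschitz_on_comp_word[of \<alpha> "{..<N}" \<phi> X lam] \<phi>_maps \<phi>_lipschitz by simp
    then have "dist (comp_word \<phi> \<alpha> x) (comp_word \<phi> \<alpha> x0) \<le> lam ^ n * dist x x0"
      using \<open>x \<in> X\<close> assms(1) by (rule lipschitz_onD)
    also have "\<dots> \<le> lam ^ n * diameter X"
      using diameter_bounded_bound[OF compact_imp_bounded[OF compact_X] \<open>x \<in> X\<close> assms(1)] lam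
      by (simp add: mult_left_mono)
    also have "\<dots> < \<delta>/2"
      using K n by simp
    finally have "dist \<omega> ((f ^^ n) x) < \<delta>"
      using \<omega>(2) \<alpha>(2) dist_triangle[of "(f ^^ n) x" \<omega> "comp_word \<phi> \<alpha> x0"] by (simp add: dist_commute)
    then show "(f ^^ n) x \<in> X \<inter> (\<Union>\<omega>\<in>Omega_set X N A \<phi> f x0. ball \<omega> \<delta>)"
      using \<omega>(1) funpow_in_invariant[OF f_maps \<open>x \<in> X\<close>] by auto
  qed
qed

lemma lipschitz_near_Omega_set:
  assumes "x0 \<in> X" "Omega_set X N A \<phi> f x0 \<inter> sing_set X N A = {}"
  obtains \<rho> where "0 < \<rho>"
    and "\<And>\<omega>. \<omega> \<in> Omega_set X N A \<phi> f x0 \<Longrightarrow> lam-lipschitz_on (ball \<omega> \<rho> \<inter> X) f"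
proof -
  obtain \<rho> where \<rho>: "0 < \<rho>"
    "\<And>\<omega> z. \<omega> \<in> Omega_set X N A \<phi> f x0 \<Longrightarrow> z \<in> sing_set X N A \<Longrightarrow> \<rho> \<le> dist \<omega> z"
    using separate_compact_closed_metric[OF compact_Omega_set[OF assms(1)] closed_sing_set assms(2)] by blast
  have "lam-lipschitz_on (ball \<omega> \<rho> \<inter> X) f" if \<omega>: "\<omega> \<in> Omega_set X N A \<phi> f x0" for \<omega>
  proof -
    have "\<omega> \<in> X"
      using Omega_set_subset[OF assms(1)] \<omega> by blast
    then have "connected (ball \<omega> \<rho> \<inter> X)" "\<omega> \<in> ball \<omega> \<rho> \<inter> X"
      using good \<rho>(1) by (auto simp: good_space_def)
    moreover have "ball \<omega> \<rho> \<inter> X \<subseteq> (\<Union>i<N. A i)"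
    proof
      fix z assume z: "z \<in> ball \<omega> \<rho> \<inter> X"
      then have "z \<notin> sing_set X N A"
        using \<rho>(2)[OF \<omega>] by force
      then show "z \<in> (\<Union>i<N. A i)"
        using z by (simp add: sing_set_def)
    qed
    ultimately obtain i where i: "i < N" "ball \<omega> \<rho> \<inter> X \<subseteq> A i"
      using connected_subset_single_piece[where A = A and N = N and X = X, OF _ Int_lower2 _ _
          pieces_openin pieces_disjoint]
      by blast
    have "lam-lipschitz_on (ball \<omega> \<rho> \<inter> X) (\<phi> i)"
      using lipschitz_on_subset[OF \<phi>_lipschitz[OF i(1)] Int_lower2] .
    then show ?thesis
      by (rule lipschitz_on_transform) (use f_eq i in auto)
  qed
  with \<rho>(1) show ?thesis
    using that by blast
qed

end

theorem lemma3p7: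
  fixes X :: "'a::metric_space set" and lam :: real and N :: nat
    and A :: "nat \<Rightarrow> 'a set" and \<phi> :: "nat \<Rightarrow> 'a \<Rightarrow> 'a" and f :: "'a \<Rightarrow> 'a" and x0 :: 'a
  assumes "good_space X"
    and "0 < lam" and "lam < 1"
    and "piecewise_contraction X lam N A \<phi> f"
    and "x0 \<in> X"
    and "Omega_set X N A \<phi> f x0 \<inter> sing_set X N A = {}"
  shows "asymptotically_periodic_on f (regular_set X N A f)"
proof -
  interpret piecewise_contraction_on X lam N A \<phi> f
    using assms(1-4) by unfold_locales
  define \<Omega> where "\<Omega> = Omega_set X N A \<phi> f x0"
  obtain \<rho> where \<rho>: "0 < \<rho>" "\<And>\<omega>. \<omega> \<in> \<Omega> \<Longrightarrow> lam-lipschitz_on (ball \<omega> \<rho> \<inter> X) f"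
    using lipschitz_near_Omega_set[OF assms(5,6), folded \<Omega>_def] by metis
  define V where "V = X \<inter> closure (\<Union>\<omega>\<in>\<Omega>. ball \<omega> (\<rho>/4))"
  interpret local_contraction X V f "\<rho>/2" lam
    unfolding V_def using lam(1) by (intro local_contraction_near[OF compact_X f_maps _ lam(2) \<rho>]) simp
  show ?thesis
  proof (rule asymptotically_periodic_on_eventually_trapped)
    fix x assume "x \<in> regular_set X N A f"
    moreover have "0 < \<rho>/4"
      using \<rho>(1) by simp
    ultimately obtain n0 where near: "\<And>n. n0 \<le> n \<Longrightarrow> (f ^^ n) x \<in> X \<inter> (\<Union>\<omega>\<in>\<Omega>. ball \<omega> (\<rho>/4))"
      using regular_orbit_eventually_near_Omega_set[OF assms(5), folded \<Omega>_def] by metis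
    have "(f ^^ (k + n0)) x \<in> V" for k
      using near[OF le_add2] closure_subset[of "\<Union>\<omega>\<in>\<Omega>. ball \<omega> (\<rho>/4)"] unfolding V_def by blast
    then have "trapped ((f ^^ n0) x)"
      by (simp add: trapped_def flip: funpow_add_apply)
    then show "\<exists>n. trapped ((f ^^ n) x)" ..
  qed
qed

end
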